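(* Let $G$ be a commutative group, $H$ its torsion subgroup, $G'=G/H$, $\varphi:G\to G'$ the natural homomorphism, $U\subset G$ finite and $U'=\varphi(U)$. Let $\vartheta$ be any of the functionals $\alpha,\alpha',\alpha'',\beta,\beta',\beta''$, with $\vartheta(U)$ computed in $G$ and $\vartheta(U')$ in $G'$. Then $\vartheta(U')\ge\vartheta(U)$.
   Context: For a finite set $U$ in a commutative group $K$, with $A,B$ ranging over nonempty finite subsets of $K$: $\alpha(U)=\inf_{A\supset U,B\supset U}\frac{|A+B|}{\sqrt{|A||B|}}$; $\alpha'(U)=\inf_{A\supset U,B\supset U,|A|=|B|}\frac{|A+B|}{|A|}$; $\alpha''(U)=\inf_{A\supset U}\frac{|A+A|}{|A|}$; $\beta(U)=\inf_{A,B}\frac{|A+B+U|}{\sqrt{|A||B|}}$; $\beta'(U)=\inf_{A,B,|A|=|B|}\frac{|A+B+U|}{\sqrt{|A||B|}}$; $\beta''(U)=\inf_A\frac{|A+A+U|}{|A|}$. *)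

theory Defs
  imports "HOL-Algebra.Algebra" Complex_Main
begin

(* Commutative groups are HOL-Algebra structures, written multiplicatively:
   the sumset A+B is the set product A <#>_G B. *)

definition fin_ne :: "('a,'b) monoid_scheme \<Rightarrow> 'a set \<Rightarrow> bool" where
  "fin_ne G A \<longleftrightarrow> A \<subseteq> carrier G \<and> finite A \<and> A \<noteq> {}"

definition torsion_subgroup :: "('a,'b) monoid_scheme \<Rightarrow> 'a set" where
  "torsion_subgroup G = {x \<in> carrier G. \<exists>n::nat. n > 0 \<and> x [^]\<^bsub>G\<^esub> n = \<one>\<^bsub>G\<^esub>}"

definition alpha_fun :: "('a,'b) monoid_scheme \<Rightarrow> 'a set \<Rightarrow> real" where
  "alpha_fun G U = Inf {real (card (A <#>\<^bsub>G\<^esub> B)) / sqrt (real (card A) * real (card B)) | A B.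
      fin_ne G A \<and> fin_ne G B \<and> U \<subseteq> A \<and> U \<subseteq> B}"

definition alpha'_fun :: "('a,'b) monoid_scheme \<Rightarrow> 'a set \<Rightarrow> real" where
  "alpha'_fun G U = Inf {real (card (A <#>\<^bsub>G\<^esub> B)) / real (card A) | A B.
      fin_ne G A \<and> fin_ne G B \<and> U \<subseteq> A \<and> U \<subseteq> B \<and> card A = card B}"

definition alpha''_fun :: "('a,'b) monoid_scheme \<Rightarrow> 'a set \<Rightarrow> real" where
  "alpha''_fun G U = Inf {real (card (A <#>\<^bsub>G\<^esub> A)) / real (card A) | A.
      fin_ne G A \<and> U \<subseteq> A}"

definition beta_fun :: "('a,'b) monoid_scheme \<Rightarrow> 'a set \<Rightarrow> real" where
  "beta_fun G U = Inf {real (card ((A <#>\<^bsub>G\<^esub> B) <#>\<^bsub>G\<^esub> U)) / sqrt (real (card A) * real (card B)) | A B.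
      fin_ne G A \<and> fin_ne G B}"

definition beta'_fun :: "('a,'b) monoid_scheme \<Rightarrow> 'a set \<Rightarrow> real" where
  "beta'_fun G U = Inf {real (card ((A <#>\<^bsub>G\<^esub> B) <#>\<^bsub>G\<^esub> U)) / sqrt (real (card A) * real (card B)) | A B.
      fin_ne G A \<and> fin_ne G B \<and> card A = card B}"

definition beta''_fun :: "('a,'b) monoid_scheme \<Rightarrow> 'a set \<Rightarrow> real" where
  "beta''_fun G U = Inf {real (card ((A <#>\<^bsub>G\<^esub> A) <#>\<^bsub>G\<^esub> U)) / real (card A) | A.
      fin_ne G A}"

end

theory Submission
  imports Defs
begin

(* Let H be any subgroup of torsion elements (here the whole torsion subgroup) and take finite
   nonempty A', B' in G/H. Lift them to finite sets S_A, S_B of G. Two elements of the finite set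
   W = S_A \<union> S_B \<union> S_A S_B \<union> S_A S_B U lying in the same coset of H differ by one of finitely many
   torsion elements, and in a commutative group these generate a finite subgroup T of H.
   Multiplication by T then identifies exactly the elements of W that lie in a common coset of H,
   so A = T S_A and B = T S_B satisfy |A| = |T| |A'|, |B| = |T| |B'|, |A B| = |T| |A' B'| and
   |A B U| = |T| |A' B' U'|, with U contained in A whenever U' is contained in A'. All six ratios
   are invariant under this common scaling, so every value attained in G/H is attained in G. *)

lemma finite_set_mult: "finite A \<Longrightarrow> finite B \<Longrightarrow> finite (A <#>\<^bsub>G\<^esub> B)"
  by (simp add: set_mult_def)

lemma card_image_eq_if_same_fibres:
  assumes "\<And>p q. p \<in> S \<Longrightarrow> q \<in> S \<Longrightarrow> f p = f q \<longleftrightarrow> g p = g q"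
  shows "card (f ` S) = card (g ` S)"
proof -
  define h where "h y = g (inv_into S f y)" for y
  have h_f: "h (f x) = g x" if "x \<in> S" for x
    unfolding h_def using assms that inv_into_into[of "f x" f S] f_inv_into_f[of "f x" f S] by auto
  have "g ` S = h ` f ` S"
    using h_f by (force simp: image_image)
  moreover have "inj_on h (f ` S)"
    using assms h_f by (auto simp: inj_on_def)
  ultimately show ?thesis
    by (simp add: card_image)
qed

lemma divide_sqrt_mult_scale:
  assumes "k > (0::nat)"
  shows "real (k * c) / sqrt (real (k * a) * real (k * b)) = real c / sqrt (real a * real b)"
proof -
  have "sqrt (real (k * a) * real (k * b)) = real k * sqrt (real a * real b)"
    by (simp add: real_sqrt_mult algebra_simps)
  then show ?thesis
    using assms by simp
qed

lemma cInf_superset_mono_nonneg: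
  fixes S S' :: "real set"
  assumes "\<And>y. y \<in> S' \<Longrightarrow> y \<in> S" "S' \<noteq> {}" "\<And>x. x \<in> S \<Longrightarrow> 0 \<le> x"
  shows "Inf S \<le> Inf S'"
  by (rule cInf_superset_mono) (use assms in \<open>auto intro: bdd_belowI[of _ 0]\<close>)

context group
begin

lemma torsion_subgroup_eq: "torsion_subgroup G = {x \<in> carrier G. ord x \<noteq> 0}"
  unfolding torsion_subgroup_def by (auto simp: ord_eq_0 dvd_pos_nat pow_eq_id)

lemma finite_generate_torsion_element:
  assumes "d \<in> torsion_subgroup G"
  shows "finite (generate G {d})"
proof -
  have "d \<in> carrier G" "ord d \<noteq> 0"
    using assms by (auto simp: torsion_subgroup_eq)
  then show ?thesis
    by (metis generate_pow_card card.infinite)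
qed

lemma card_subgroup_pos: "subgroup T G \<Longrightarrow> finite T \<Longrightarrow> card T > 0"
  by (auto simp: card_gt_0_iff dest: subgroup.one_closed)

lemma subset_subgroup_set_mult:
  assumes "subgroup T G" "S \<subseteq> carrier G"
  shows "S \<subseteq> T <#> S"
proof
  fix x assume "x \<in> S"
  then have "x = \<one> \<otimes> x"
    using assms(2) by auto
  then show "x \<in> T <#> S"
    using \<open>x \<in> S\<close> subgroup.one_closed[OF assms(1)] unfolding set_mult_def by blast
qed

lemma card_subgroup_set_mult:
  assumes T: "subgroup T G" "finite T" and S: "finite S" "S \<subseteq> carrier G"
  shows "card (T <#> S) = card T * card ((\<lambda>x. T #> x) ` S)"
proof -
  let ?C = "(\<lambda>x. T #> x) ` S"
  have "T <#> S = \<Union> ?C"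
    unfolding set_mult_def r_coset_def by blast
  have C_rcosets: "?C \<subseteq> rcosets T"
    using S(2) subgroup.subset[OF T(1)] by (auto intro: rcosetsI)
  have card_C: "card c = card T" if "c \<in> ?C" for c
    using card_rcosets_equal[of c T] C_rcosets that subgroup.subset[OF T(1)] by auto
  have "card (\<Union> ?C) = (\<Sum>c\<in>?C. card c)"
    using card_C card_subgroup_pos[OF T]
    by (intro card_Union_disjoint pairwise_subset[OF rcos_disjoint[OF T(1)] C_rcosets])
      (auto intro: card_ge_0_finite)
  also have "\<dots> = card T * card ?C"
    using card_C by simp
  finally show ?thesis
    using \<open>T <#> S = \<Union> ?C\<close> by simp
qed

lemma card_subgroup_set_mult_separating:
  assumes T: "subgroup T G" "finite T" "T \<subseteq> H" and H: "subgroup H G"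
    and S: "finite S" "S \<subseteq> carrier G"
    and separating: "\<And>p q. p \<in> S \<Longrightarrow> q \<in> S \<Longrightarrow> H #> p = H #> q \<Longrightarrow> T #> p = T #> q"
  shows "card (T <#> S) = card T * card ((\<lambda>x. H #> x) ` S)"
proof -
  have "T #> p = T #> q \<longleftrightarrow> H #> p = H #> q" if "p \<in> S" "q \<in> S" for p q
  proof
    assume "T #> p = T #> q"
    have p: "p \<in> carrier G" and q: "q \<in> carrier G"
      using that S(2) by auto
    have "q \<otimes> inv p \<in> T"
      using subgroup.rcos_module_imp[OF T(1) is_group p] repr_independenceD[OF T(1) q]
        \<open>T #> p = T #> q\<close> by blast
    then have "q \<in> H #> p"
      using subgroup.rcos_module_rev[OF H is_group p q] T(3) by blast
    then show "H #> p = H #> q"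
      using repr_independence[OF _ p H] by blast
  qed (use separating that in blast)
  then have "card ((\<lambda>x. T #> x) ` S) = card ((\<lambda>x. H #> x) ` S)"
    by (rule card_image_eq_if_same_fibres)
  then show ?thesis
    using card_subgroup_set_mult[OF T(1,2) S] by simp
qed

text \<open>The lift need not consist of coset representatives; adding the elements of \<open>U\<close>
  lying over \<open>A'\<close> ensures that \<open>U\<close> is lifted along with \<open>(\<lambda>x. H #> x) ` U\<close>.\<close>
lemma obtain_finite_lift:
  assumes "finite A'" "A' \<subseteq> rcosets H" "finite U" "U \<subseteq> carrier G"
  obtains S where "finite S" "S \<subseteq> carrier G" "(\<lambda>x. H #> x) ` S = A'"
    "{u \<in> U. H #> u \<in> A'} \<subseteq> S"
proof -
  have "A' \<subseteq> (\<lambda>x. H #> x) ` carrier G"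
    using assms(2) unfolding RCOSETS_def by blast
  then obtain C where C: "C \<subseteq> carrier G" "finite C" "A' = (\<lambda>x. H #> x) ` C"
    using finite_subset_image[OF assms(1)] by blast
  show thesis
    by (rule that[of "C \<union> {u \<in> U. H #> u \<in> A'}"]) (use C assms(3,4) in auto)
qed

end

context comm_group
begin

lemma set_mult_comm:
  assumes "A \<subseteq> carrier G" "B \<subseteq> carrier G"
  shows "A <#> B = B <#> A"
  using assms unfolding set_mult_def by (blast intro: m_comm)

lemma set_mult_subgroup_distrib:
  assumes T: "subgroup T G" and "S \<subseteq> carrier G" "R \<subseteq> carrier G"
  shows "(T <#> S) <#> (T <#> R) = T <#> (S <#> R)"
proof -
  have T_carrier: "T \<subseteq> carrier G"
    using subgroup.subset[OF T] .
  have "(T <#> S) <#> (T <#> R) = T <#> ((S <#> T) <#> R)"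
    using assms(2,3) T_carrier by (simp add: set_mult_assoc set_mult_closed)
  also have "\<dots> = (T <#> T) <#> (S <#> R)"
    using assms(2,3) T_carrier set_mult_comm[of S T]
    by (simp add: set_mult_assoc set_mult_closed)
  finally show ?thesis
    using subgroup_mult_id[OF T] by simp
qed

lemma subgroup_torsion_subgroup: "subgroup (torsion_subgroup G) G"
proof (rule subgroupI)
  show "torsion_subgroup G \<subseteq> carrier G"
    by (auto simp: torsion_subgroup_eq)
  have "\<one> \<in> torsion_subgroup G"
    by (simp add: torsion_subgroup_eq)
  then show "torsion_subgroup G \<noteq> {}"
    by blast
  show "inv a \<in> torsion_subgroup G" if "a \<in> torsion_subgroup G" for a
    using that by (simp add: torsion_subgroup_eq)
  show "a \<otimes> b \<in> torsion_subgroup G"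
    if "a \<in> torsion_subgroup G" "b \<in> torsion_subgroup G" for a b
  proof -
    have ab: "a \<in> carrier G" "b \<in> carrier G" and "ord a * ord b \<noteq> 0"
      using that by (auto simp: torsion_subgroup_eq)
    then have "ord (a \<otimes> b) \<noteq> 0"
      using abelian_ord_mul_divides[OF ab] by (metis dvd_0_left_iff)
    then show ?thesis
      using ab by (simp add: torsion_subgroup_eq)
  qed
qed

lemma obtain_finite_subgroup:
  assumes H: "subgroup H G" "H \<subseteq> torsion_subgroup G" and D: "finite D" "D \<subseteq> H"
  obtains T where "subgroup T G" "finite T" "D \<subseteq> T" "T \<subseteq> H"
  using D
proof (induction D arbitrary: thesis rule: finite_induct)
  case empty
  show ?case
    by (rule empty.prems(1)[of "{\<one>}"])
      (use H(1) in \<open>auto intro: triv_subgroup subgroup.one_closed\<close>)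
next
  case (insert d D)
  then obtain T where T: "subgroup T G" "finite T" "D \<subseteq> T" "T \<subseteq> H"
    by blast
  let ?T' = "generate G {d} <#> T"
  have d: "d \<in> carrier G" "d \<in> H"
    using insert.prems(2) subgroup.subset[OF H(1)] by auto
  have gen: "subgroup (generate G {d}) G" "generate G {d} \<subseteq> H"
    using d generate_is_subgroup generate_subgroup_incl[OF _ H(1)] by auto
  show ?case
  proof (rule insert.prems(1))
    show "subgroup ?T' G"
      using mult_subgroups[OF gen(1) T(1)] .
    show "finite ?T'"
      using finite_set_mult finite_generate_torsion_element H(2) d(2) T(2) by blast
    have "generate G {d} \<subseteq> ?T'"
      using subgroup.subset[OF gen(1)] subgroup.one_closed[OF T(1)]
      by (force simp: set_mult_def)
    moreover have "T \<subseteq> ?T'"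
      using subset_subgroup_set_mult[OF gen(1) subgroup.subset[OF T(1)]] .
    ultimately show "insert d D \<subseteq> ?T'"
      using T(3) generate.incl[of d "{d}"] by blast
    show "?T' \<subseteq> H"
      using mono_set_mult[OF gen(2) T(4), of G] subgroup_mult_id[OF H(1)] by simp
  qed
qed

lemma obtain_separating_finite_subgroup:
  assumes H: "subgroup H G" "H \<subseteq> torsion_subgroup G" and W: "finite W" "W \<subseteq> carrier G"
  obtains T where "subgroup T G" "finite T" "T \<subseteq> H"
    "\<And>p q. p \<in> W \<Longrightarrow> q \<in> W \<Longrightarrow> H #> p = H #> q \<Longrightarrow> T #> p = T #> q"
proof -
  let ?D = "(\<lambda>(p, q). q \<otimes> inv p) ` (W \<times> W) \<inter> H"
  obtain T where T: "subgroup T G" "finite T" "?D \<subseteq> T" "T \<subseteq> H"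
    using obtain_finite_subgroup[OF H, of ?D] W(1) by blast
  have "T #> p = T #> q" if pq: "p \<in> W" "q \<in> W" "H #> p = H #> q" for p q
  proof -
    have p: "p \<in> carrier G" and q: "q \<in> carrier G"
      using pq W(2) by auto
    have "q \<otimes> inv p \<in> H"
      using subgroup.rcos_module_imp[OF H(1) is_group p] repr_independenceD[OF H(1) q] pq(3)
      by blast
    then have "q \<otimes> inv p \<in> T"
      using T(3) pq(1,2) by blast
    then have "q \<in> T #> p"
      using subgroup.rcos_module_rev[OF T(1) is_group p q] by blast
    then show ?thesis
      using repr_independence[OF _ p T(1)] by blast
  qed
  then show thesis
    using that T by blast
qed

end

locale torsion_quotient = comm_group +
  fixes H :: "'a set" and U :: "'a set"
  assumes subgroup_H: "subgroup H G" and H_torsion: "H \<subseteq> torsion_subgroup G"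
    and finite_U: "finite U" and U_carrier: "U \<subseteq> carrier G"
begin

abbreviation U' :: "'a set set" where
  "U' \<equiv> (\<lambda>x. H #> x) ` U"

lemma carrier_Mod: "carrier (G Mod H) = rcosets H"
  by (simp add: FactGroup_def)

lemma fin_ne_Mod_insert_image:
  assumes "finite S" "S \<subseteq> carrier G"
  shows "fin_ne (G Mod H) (insert H ((\<lambda>x. H #> x) ` S))"
proof -
  have "H \<in> rcosets H"
    using rcosetsI[OF subgroup.subset[OF subgroup_H] one_closed] subgroup.subset[OF subgroup_H]
    by simp
  then show ?thesis
    unfolding fin_ne_def carrier_Mod
    using assms rcosetsI[OF subgroup.subset[OF subgroup_H]] by auto
qed

lemma image_set_mult_Mod:
  assumes "S \<subseteq> carrier G" "R \<subseteq> carrier G"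
  shows "(\<lambda>x. H #> x) ` (S <#> R) = (\<lambda>x. H #> x) ` S <#>\<^bsub>G Mod H\<^esub> (\<lambda>x. H #> x) ` R"
  using set_mult_hom[OF normal.r_coset_hom_Mod[OF subgroup_imp_normal[OF subgroup_H]] assms] .

lemma obtain_scaling_subgroup:
  assumes SA: "finite SA" "SA \<subseteq> carrier G" and SB: "finite SB" "SB \<subseteq> carrier G"
  obtains T where "subgroup T G" "finite T"
    "card (T <#> SA) = card T * card ((\<lambda>x. H #> x) ` SA)"
    "card (T <#> SB) = card T * card ((\<lambda>x. H #> x) ` SB)"
    "card ((T <#> SA) <#> (T <#> SB))
      = card T * card ((\<lambda>x. H #> x) ` SA <#>\<^bsub>G Mod H\<^esub> (\<lambda>x. H #> x) ` SB)"
    "card ((T <#> SA) <#> (T <#> SB) <#> U)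
      = card T * card (((\<lambda>x. H #> x) ` SA <#>\<^bsub>G Mod H\<^esub> (\<lambda>x. H #> x) ` SB) <#>\<^bsub>G Mod H\<^esub> U')"
proof -
  have SA_SB: "SA <#> SB \<subseteq> carrier G"
    using set_mult_closed[OF SA(2) SB(2)] .
  define W where "W = SA \<union> SB \<union> (SA <#> SB) \<union> (SA <#> SB <#> U)"
  have W: "finite W" "W \<subseteq> carrier G"
    unfolding W_def using SA SB SA_SB finite_U U_carrier
    by (simp_all add: finite_set_mult set_mult_closed)
  obtain T where T: "subgroup T G" "finite T" "T \<subseteq> H"
    and separating: "\<And>p q. p \<in> W \<Longrightarrow> q \<in> W \<Longrightarrow> H #> p = H #> q \<Longrightarrow> T #> p = T #> q"
    using obtain_separating_finite_subgroup[OF subgroup_H H_torsion W] by blast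
  have card_T: "card (T <#> S) = card T * card ((\<lambda>x. H #> x) ` S)" if S_W: "S \<subseteq> W" for S
  proof (rule card_subgroup_set_mult_separating[OF T subgroup_H])
    show "finite S"
      using S_W W(1) by (rule finite_subset)
    show "S \<subseteq> carrier G"
      using S_W W(2) by (rule order_trans)
    show "T #> p = T #> q" if "p \<in> S" "q \<in> S" "H #> p = H #> q" for p q
      using separating S_W that by blast
  qed
  have AB: "(T <#> SA) <#> (T <#> SB) = T <#> (SA <#> SB)"
    by (rule set_mult_subgroup_distrib[OF T(1) SA(2) SB(2)])
  have ABU: "(T <#> SA) <#> (T <#> SB) <#> U = T <#> (SA <#> SB <#> U)"
    unfolding AB using SA_SB subgroup.subset[OF T(1)] U_carrier by (simp add: set_mult_assoc)
  show thesis
  proof (rule that[OF T(1,2)])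
    show "card (T <#> SA) = card T * card ((\<lambda>x. H #> x) ` SA)"
      by (rule card_T) (auto simp: W_def)
    show "card (T <#> SB) = card T * card ((\<lambda>x. H #> x) ` SB)"
      by (rule card_T) (auto simp: W_def)
    show "card ((T <#> SA) <#> (T <#> SB))
        = card T * card ((\<lambda>x. H #> x) ` SA <#>\<^bsub>G Mod H\<^esub> (\<lambda>x. H #> x) ` SB)"
      unfolding AB image_set_mult_Mod[OF SA(2) SB(2), symmetric] by (rule card_T) (auto simp: W_def)
    show "card ((T <#> SA) <#> (T <#> SB) <#> U)
        = card T * card (((\<lambda>x. H #> x) ` SA <#>\<^bsub>G Mod H\<^esub> (\<lambda>x. H #> x) ` SB) <#>\<^bsub>G Mod H\<^esub> U')"
      unfolding ABU image_set_mult_Mod[OF SA(2) SB(2), symmetric]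
        image_set_mult_Mod[OF SA_SB U_carrier, symmetric]
      by (rule card_T) (auto simp: W_def)
  qed
qed

lemma obtain_scaled_lift:
  assumes A': "fin_ne (G Mod H) A'" and B': "fin_ne (G Mod H) B'"
  obtains A B k where "k > 0" "fin_ne G A" "fin_ne G B"
    "card A = k * card A'" "card B = k * card B'"
    "card (A <#> B) = k * card (A' <#>\<^bsub>G Mod H\<^esub> B')"
    "card ((A <#> B) <#> U) = k * card ((A' <#>\<^bsub>G Mod H\<^esub> B') <#>\<^bsub>G Mod H\<^esub> U')"
    "U' \<subseteq> A' \<Longrightarrow> U \<subseteq> A" "U' \<subseteq> B' \<Longrightarrow> U \<subseteq> B" "A' = B' \<Longrightarrow> A = B"
proof -
  have A'_fin: "finite A'" "A' \<subseteq> rcosets H" and B'_fin: "finite B'" "B' \<subseteq> rcosets H"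
    using A' B' unfolding fin_ne_def carrier_Mod by auto
  obtain SA where SA: "finite SA" "SA \<subseteq> carrier G" "(\<lambda>x. H #> x) ` SA = A'"
    "{u \<in> U. H #> u \<in> A'} \<subseteq> SA"
    by (rule obtain_finite_lift[OF A'_fin finite_U U_carrier])
  obtain SB where SB: "finite SB" "SB \<subseteq> carrier G" "(\<lambda>x. H #> x) ` SB = B'"
    "{u \<in> U. H #> u \<in> B'} \<subseteq> SB" and SB_SA: "A' = B' \<Longrightarrow> SB = SA"
  proof (cases "A' = B'")
    case True
    then show thesis
      using that SA by simp
  next
    case False
    obtain SB where "finite SB" "SB \<subseteq> carrier G" "(\<lambda>x. H #> x) ` SB = B'"
      "{u \<in> U. H #> u \<in> B'} \<subseteq> SB"
      by (rule obtain_finite_lift[OF B'_fin finite_U U_carrier])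
    then show thesis
      using that False by blast
  qed
  obtain T where T: "subgroup T G" "finite T"
    and cards: "card (T <#> SA) = card T * card A'" "card (T <#> SB) = card T * card B'"
      "card ((T <#> SA) <#> (T <#> SB)) = card T * card (A' <#>\<^bsub>G Mod H\<^esub> B')"
      "card ((T <#> SA) <#> (T <#> SB) <#> U)
        = card T * card ((A' <#>\<^bsub>G Mod H\<^esub> B') <#>\<^bsub>G Mod H\<^esub> U')"
    using obtain_scaling_subgroup[OF SA(1,2) SB(1,2)] unfolding SA(3) SB(3) by blast
  have "card T > 0"
    using card_subgroup_pos[OF T] .
  have lift_fin_ne: "fin_ne G (T <#> S)" if "S \<subseteq> carrier G" "card (T <#> S) > 0" for S
    using that set_mult_closed[OF subgroup.subset[OF T(1)]] card_gt_0_iff unfolding fin_ne_def by blast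
  show thesis
  proof (rule that[of "card T" "T <#> SA" "T <#> SB", OF \<open>card T > 0\<close> _ _ cards])
    show "fin_ne G (T <#> SA)"
      using lift_fin_ne[OF SA(2)] cards(1) A' \<open>card T > 0\<close> by (simp add: fin_ne_def card_gt_0_iff)
    show "fin_ne G (T <#> SB)"
      using lift_fin_ne[OF SB(2)] cards(2) B' \<open>card T > 0\<close> by (simp add: fin_ne_def card_gt_0_iff)
    show "U \<subseteq> T <#> SA" if "U' \<subseteq> A'"
      using SA(4) that subset_subgroup_set_mult[OF T(1) SA(2)] by blast
    show "U \<subseteq> T <#> SB" if "U' \<subseteq> B'"
      using SB(4) that subset_subgroup_set_mult[OF T(1) SB(2)] by blast
    show "T <#> SA = T <#> SB" if "A' = B'"
      using SB_SA that by simp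
  qed
qed

lemma alpha_fun_le_Mod: "alpha_fun G U \<le> alpha_fun (G Mod H) U'"
  unfolding alpha_fun_def
proof (rule cInf_superset_mono_nonneg, goal_cases)
  case (1 y)
  then obtain A' B' where A'B': "fin_ne (G Mod H) A'" "fin_ne (G Mod H) B'" "U' \<subseteq> A'" "U' \<subseteq> B'"
    and y: "y = real (card (A' <#>\<^bsub>G Mod H\<^esub> B')) / sqrt (real (card A') * real (card B'))"
    by blast
  obtain A B k where lift: "fin_ne G A" "fin_ne G B" "U \<subseteq> A" "U \<subseteq> B"
    and k: "k > 0" "card A = k * card A'" "card B = k * card B'"
      "card (A <#> B) = k * card (A' <#>\<^bsub>G Mod H\<^esub> B')"
    using obtain_scaled_lift[OF A'B'(1,2)] A'B'(3,4) by metis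
  have "real (card (A <#> B)) / sqrt (real (card A) * real (card B)) = y"
    unfolding y k(2-4) by (rule divide_sqrt_mult_scale[OF k(1)])
  with lift show ?case
    by blast
next
  case 2
  show ?case
    using fin_ne_Mod_insert_image[OF finite_U U_carrier] by blast
next
  case (3 x)
  then show ?case
    by auto
qed

lemma alpha'_fun_le_Mod: "alpha'_fun G U \<le> alpha'_fun (G Mod H) U'"
  unfolding alpha'_fun_def
proof (rule cInf_superset_mono_nonneg, goal_cases)
  case (1 y)
  then obtain A' B' where A'B': "fin_ne (G Mod H) A'" "fin_ne (G Mod H) B'" "U' \<subseteq> A'" "U' \<subseteq> B'"
    "card A' = card B'" and y: "y = real (card (A' <#>\<^bsub>G Mod H\<^esub> B')) / real (card A')"
    by blast
  obtain A B k where lift: "fin_ne G A" "fin_ne G B" "U \<subseteq> A" "U \<subseteq> B"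
    and k: "k > 0" "card A = k * card A'" "card B = k * card B'"
      "card (A <#> B) = k * card (A' <#>\<^bsub>G Mod H\<^esub> B')"
    using obtain_scaled_lift[OF A'B'(1,2)] A'B'(3,4) by metis
  have "real (card (A <#> B)) / real (card A) = y"
    unfolding y k(2,4) using k(1) by simp
  moreover have "card A = card B"
    using k(2,3) A'B'(5) by simp
  ultimately show ?case
    using lift by blast
next
  case 2
  show ?case
    using fin_ne_Mod_insert_image[OF finite_U U_carrier] by blast
next
  case (3 x)
  then show ?case
    by auto
qed

lemma alpha''_fun_le_Mod: "alpha''_fun G U \<le> alpha''_fun (G Mod H) U'"
  unfolding alpha''_fun_def
proof (rule cInf_superset_mono_nonneg, goal_cases)
  case (1 y)
  then obtain A' where A': "fin_ne (G Mod H) A'" "U' \<subseteq> A'"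
    and y: "y = real (card (A' <#>\<^bsub>G Mod H\<^esub> A')) / real (card A')"
    by blast
  obtain A k where lift: "fin_ne G A" "U \<subseteq> A"
    and k: "k > 0" "card A = k * card A'" "card (A <#> A) = k * card (A' <#>\<^bsub>G Mod H\<^esub> A')"
    using obtain_scaled_lift[OF A'(1,1)] A'(2) by metis
  have "real (card (A <#> A)) / real (card A) = y"
    unfolding y k(2,3) using k(1) by simp
  with lift show ?case
    by blast
next
  case 2
  show ?case
    using fin_ne_Mod_insert_image[OF finite_U U_carrier] by blast
next
  case (3 x)
  then show ?case
    by auto
qed

lemma beta_fun_le_Mod: "beta_fun G U \<le> beta_fun (G Mod H) U'"
  unfolding beta_fun_def
proof (rule cInf_superset_mono_nonneg, goal_cases)
  case (1 y)
  then obtain A' B' where A'B': "fin_ne (G Mod H) A'" "fin_ne (G Mod H) B'"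
    and y: "y = real (card ((A' <#>\<^bsub>G Mod H\<^esub> B') <#>\<^bsub>G Mod H\<^esub> U'))
      / sqrt (real (card A') * real (card B'))"
    by blast
  obtain A B k where lift: "fin_ne G A" "fin_ne G B"
    and k: "k > 0" "card A = k * card A'" "card B = k * card B'"
      "card ((A <#> B) <#> U) = k * card ((A' <#>\<^bsub>G Mod H\<^esub> B') <#>\<^bsub>G Mod H\<^esub> U')"
    using obtain_scaled_lift[OF A'B'] by metis
  have "real (card ((A <#> B) <#> U)) / sqrt (real (card A) * real (card B)) = y"
    unfolding y k(2-4) by (rule divide_sqrt_mult_scale[OF k(1)])
  with lift show ?case
    by blast
next
  case 2
  show ?case
    using fin_ne_Mod_insert_image[of "{}"] by blast
next
  case (3 x)
  then show ?case
    by auto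
qed

lemma beta'_fun_le_Mod: "beta'_fun G U \<le> beta'_fun (G Mod H) U'"
  unfolding beta'_fun_def
proof (rule cInf_superset_mono_nonneg, goal_cases)
  case (1 y)
  then obtain A' B' where A'B': "fin_ne (G Mod H) A'" "fin_ne (G Mod H) B'" "card A' = card B'"
    and y: "y = real (card ((A' <#>\<^bsub>G Mod H\<^esub> B') <#>\<^bsub>G Mod H\<^esub> U'))
      / sqrt (real (card A') * real (card B'))"
    by blast
  obtain A B k where lift: "fin_ne G A" "fin_ne G B"
    and k: "k > 0" "card A = k * card A'" "card B = k * card B'"
      "card ((A <#> B) <#> U) = k * card ((A' <#>\<^bsub>G Mod H\<^esub> B') <#>\<^bsub>G Mod H\<^esub> U')"
    using obtain_scaled_lift[OF A'B'(1,2)] by metis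
  have "real (card ((A <#> B) <#> U)) / sqrt (real (card A) * real (card B)) = y"
    unfolding y k(2-4) by (rule divide_sqrt_mult_scale[OF k(1)])
  moreover have "card A = card B"
    using k(2,3) A'B'(3) by simp
  ultimately show ?case
    using lift by blast
next
  case 2
  show ?case
    using fin_ne_Mod_insert_image[of "{}"] by blast
next
  case (3 x)
  then show ?case
    by auto
qed

lemma beta''_fun_le_Mod: "beta''_fun G U \<le> beta''_fun (G Mod H) U'"
  unfolding beta''_fun_def
proof (rule cInf_superset_mono_nonneg, goal_cases)
  case (1 y)
  then obtain A' where A': "fin_ne (G Mod H) A'"
    and y: "y = real (card ((A' <#>\<^bsub>G Mod H\<^esub> A') <#>\<^bsub>G Mod H\<^esub> U')) / real (card A')"
    by blast
  obtain A k where lift: "fin_ne G A"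
    and k: "k > 0" "card A = k * card A'"
      "card ((A <#> A) <#> U) = k * card ((A' <#>\<^bsub>G Mod H\<^esub> A') <#>\<^bsub>G Mod H\<^esub> U')"
    using obtain_scaled_lift[OF A' A'] by metis
  have "real (card ((A <#> A) <#> U)) / real (card A) = y"
    unfolding y k(2,3) using k(1) by simp
  with lift show ?case
    by blast
next
  case 2
  show ?case
    using fin_ne_Mod_insert_image[of "{}"] by blast
next
  case (3 x)
  then show ?case
    by auto
qed

end

theorem mainTheorem18:
  fixes G :: "('a, 'b) monoid_scheme" and U :: "'a set"
  assumes "comm_group G" and "U \<subseteq> carrier G" and "finite U"
  defines "H \<equiv> torsion_subgroup G"
  defines "U' \<equiv> (\<lambda>x. H #>\<^bsub>G\<^esub> x) ` U"
  shows "alpha_fun (G Mod H) U' \<ge> alpha_fun G U \<and>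
         alpha'_fun (G Mod H) U' \<ge> alpha'_fun G U \<and>
         alpha''_fun (G Mod H) U' \<ge> alpha''_fun G U \<and>
         beta_fun (G Mod H) U' \<ge> beta_fun G U \<and>
         beta'_fun (G Mod H) U' \<ge> beta'_fun G U \<and>
         beta''_fun (G Mod H) U' \<ge> beta''_fun G U"
proof -
  interpret torsion_quotient G H U
    using assms comm_group.subgroup_torsion_subgroup[OF assms(1)]
    by (simp add: torsion_quotient_def torsion_quotient_axioms_def)
  show ?thesis
    unfolding U'_def
    using alpha_fun_le_Mod alpha'_fun_le_Mod alpha''_fun_le_Mod
      beta_fun_le_Mod beta'_fun_le_Mod beta''_fun_le_Mod
    by simp
qed

end
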